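(* If Weighted Majority Rule 5 selects $P$ over $Q$, then $SC(P)\le SC(Q)+(1+\sqrt2)\,SC(Z)$ for every point $Z$ of the metric space.
   Context: Voters $N$ and candidates $P,Q$ are points of an arbitrary metric space $(X,d)$; $SC(Y)=\sum_{i\in N}d(i,Y)$ for $Y\in X$. $A$ is the set of voters preferring $P$ ($d(i,P)\le d(i,Q)$) with strengths $\alpha_i=d(i,Q)/d(i,P)$; $B$ the set preferring $Q$ with strengths $\beta_j=d(j,P)/d(j,Q)$. Let $w(x)=\frac{\sqrt2x-1}{x+1}$ for $x>\sqrt2$ and $w(x)=x-1$ for $1\le x\le\sqrt2$. Weighted Majority Rule 5 selects $P$ over $Q$ iff $\sum_{i\in A}w(\alpha_i)\ge\sum_{j\in B}w(\beta_j)$. *)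

theory Defs
  imports "HOL-Analysis.Analysis"
begin

definition wmr5_w :: "real \<Rightarrow> real" where
  "wmr5_w x = (if x > sqrt 2 then (sqrt 2 * x - 1) / (x + 1) else x - 1)"

text \<open>If a = 0 the strength is infinite; we use the limit
  value sqrt 2 of w at infinity (and 0 if also b = 0, i.e. a tie of strength 1).\<close>
definition voter_weight :: "real \<Rightarrow> real \<Rightarrow> real" where
  "voter_weight a b = (if a = 0 then (if b = 0 then 0 else sqrt 2) else wmr5_w (b / a))"

definition SC :: "'v set \<Rightarrow> ('v \<Rightarrow> 'a::metric_space) \<Rightarrow> 'a \<Rightarrow> real" where
  "SC N loc Y = (\<Sum>i\<in>N. dist (loc i) Y)"

definition WMR5_selects :: "'v set \<Rightarrow> ('v \<Rightarrow> 'a::metric_space) \<Rightarrow> 'a \<Rightarrow> 'a \<Rightarrow> bool" where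
  "WMR5_selects N loc P Q \<longleftrightarrow>
     (\<Sum>i\<in>{i\<in>N. dist (loc i) P \<le> dist (loc i) Q}. voter_weight (dist (loc i) P) (dist (loc i) Q))
     \<ge> (\<Sum>j\<in>{j\<in>N. dist (loc j) Q < dist (loc j) P}. voter_weight (dist (loc j) Q) (dist (loc j) P))"

end

theory Submission
  imports Defs
begin

text \<open>
  Fix voter i and put a = d(i,P), b = d(i,Q), t = d(i,Z), x = d(P,Z). The weight w of a
  voter with strength r satisfies r - 1 \<le> r w, w \<le> r - 1 and w \<le> sqrt 2. Combined with the
  triangle inequality for x, these give a - b - sqrt 2 t \<le> -x w for a supporter of P and
  a - b - sqrt 2 t \<le> x w for a supporter of Q. Summing over all voters, the right-hand sides
  add up to x times the weight difference, which WMR5 forces to be \<le> 0. This yields even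
  SC(P) \<le> SC(Q) + sqrt 2 SC(Z).
\<close>

lemma wmr5_w_nonneg: "1 \<le> r \<Longrightarrow> 0 \<le> wmr5_w r"
  using mult_mono[of 1 "sqrt 2" 1 r] by (auto simp: wmr5_w_def)

lemma wmr5_w_le_sqrt2: "1 \<le> r \<Longrightarrow> wmr5_w r \<le> sqrt 2"
  by (auto simp: wmr5_w_def divide_le_eq algebra_simps)

lemma wmr5_w_le_minus_one:
  assumes "1 \<le> r"
  shows "wmr5_w r \<le> r - 1"
proof (cases "sqrt 2 < r")
  case True
  have "sqrt 2 * r \<le> r * r"
    using True assms by (intro mult_right_mono) auto
  then have "sqrt 2 * r - 1 \<le> (r - 1) * (r + 1)"
    by (simp add: algebra_simps)
  then show ?thesis
    using True assms by (simp add: wmr5_w_def divide_le_eq)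
qed (simp add: wmr5_w_def)

lemma minus_one_le_mult_wmr5_w:
  assumes "1 \<le> r"
  shows "r - 1 \<le> r * wmr5_w r"
proof (cases "sqrt 2 < r")
  case True
  \<comment> \<open>(sqrt 2 - 1) r^2 - r + 1 = (sqrt 2 - 1) (1 + (r - sqrt 2) (r - 1))\<close>
  have "0 \<le> (sqrt 2 - 1) * (1 + (r - sqrt 2) * (r - 1))"
    using True assms by simp
  then have "(r - 1) * (r + 1) \<le> r * (sqrt 2 * r - 1)"
    by (simp add: algebra_simps)
  then show ?thesis
    using True assms by (simp add: wmr5_w_def le_divide_eq)
next
  case False
  have "1 * (r - 1) \<le> r * (r - 1)"
    using assms by (intro mult_right_mono) auto
  then show ?thesis
    using False by (simp add: wmr5_w_def)
qed

lemma voter_weight_nonneg: "0 \<le> a \<Longrightarrow> a \<le> b \<Longrightarrow> 0 \<le> voter_weight a b"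
  by (simp add: voter_weight_def wmr5_w_nonneg)

lemma voter_weight_le_sqrt2: "0 \<le> a \<Longrightarrow> a \<le> b \<Longrightarrow> voter_weight a b \<le> sqrt 2"
  by (simp add: voter_weight_def wmr5_w_le_sqrt2)

lemma mult_voter_weight_le_diff:
  assumes "0 \<le> a" "a \<le> b"
  shows "a * voter_weight a b \<le> b - a"
proof (cases "a = 0")
  case False
  then have "a * wmr5_w (b / a) \<le> a * (b / a - 1)"
    using assms wmr5_w_le_minus_one[of "b / a"] by simp
  then show ?thesis
    using False by (simp add: voter_weight_def algebra_simps)
qed (use assms in \<open>simp add: voter_weight_def\<close>)

lemma diff_le_mult_voter_weight:
  assumes "0 \<le> a" "a \<le> b"
  shows "b - a \<le> b * voter_weight a b"
proof (cases "a = 0")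
  case True
  have "1 * b \<le> b * sqrt 2"
    using assms by (subst mult.commute, intro mult_right_mono) auto
  then show ?thesis
    using True by (simp add: voter_weight_def)
next
  case False
  then have "a * (b / a - 1) \<le> a * (b / a * wmr5_w (b / a))"
    using assms by (intro mult_left_mono minus_one_le_mult_wmr5_w) auto
  then show ?thesis
    using False by (simp add: voter_weight_def algebra_simps)
qed

text \<open>Here a, b are the distances of a voter to the candidate it prefers and to the other one,
  t its distance to Z, and x the distance between Z and the candidate it prefers (resp. the
  other one), so that the triangle inequality gives the hypothesis on x.\<close>

lemma supporter_bound:
  fixes a b t x :: real
  assumes "0 \<le> a" "a \<le> b" "0 \<le> t" "x \<le> a + t"
  shows "a - b - sqrt 2 * t \<le> - (x * voter_weight a b)"
proof -
  let ?w = "voter_weight a b"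
  have "x * ?w \<le> a * ?w + t * ?w"
    using assms mult_right_mono[OF assms(4) voter_weight_nonneg] by (simp add: algebra_simps)
  also have "\<dots> \<le> (b - a) + t * sqrt 2"
    using assms by (intro add_mono mult_voter_weight_le_diff mult_left_mono voter_weight_le_sqrt2)
  finally show ?thesis by (simp add: mult.commute)
qed

lemma opponent_bound:
  fixes a b t x :: real
  assumes "0 \<le> b" "b \<le> a" "0 \<le> t" "a \<le> x + t"
  shows "a - b - sqrt 2 * t \<le> x * voter_weight b a"
proof -
  let ?w = "voter_weight b a"
  have "a - b \<le> a * ?w"
    using assms(1,2) by (rule diff_le_mult_voter_weight)
  also have "\<dots> \<le> x * ?w + t * ?w"
    using mult_right_mono[OF assms(4) voter_weight_nonneg] assms by (simp add: algebra_simps)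
  also have "t * ?w \<le> t * sqrt 2"
    using assms by (intro mult_left_mono voter_weight_le_sqrt2)
  finally show ?thesis by (simp add: mult.commute)
qed

lemma SC_nonneg: "0 \<le> SC N loc Y"
  by (simp add: SC_def sum_nonneg)

lemma SC_le_of_WMR5_selects:
  fixes N :: "'v set" and loc :: "'v \<Rightarrow> 'a::metric_space" and P Q Z :: 'a
  assumes "finite N" and "WMR5_selects N loc P Q"
  shows "SC N loc P \<le> SC N loc Q + sqrt 2 * SC N loc Z"
proof -
  define x where "x = dist P Z"
  define f where "f i = dist (loc i) P - dist (loc i) Q - sqrt 2 * dist (loc i) Z" for i
  define A where "A = {i\<in>N. dist (loc i) P \<le> dist (loc i) Q}"
  define B where "B = {j\<in>N. dist (loc j) Q < dist (loc j) P}"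
  define wA where "wA i = voter_weight (dist (loc i) P) (dist (loc i) Q)" for i
  define wB where "wB j = voter_weight (dist (loc j) Q) (dist (loc j) P)" for j
  have "N = A \<union> B" "A \<inter> B = {}" "finite A" "finite B"
    using assms(1) by (auto simp: A_def B_def)
  then have "sum f N = sum f A + sum f B"
    by (simp add: sum.union_disjoint)
  also have "\<dots> \<le> (\<Sum>i\<in>A. - (x * wA i)) + (\<Sum>j\<in>B. x * wB j)"
  proof (intro add_mono sum_mono)
    fix i assume "i \<in> A"
    moreover have "x \<le> dist (loc i) P + dist (loc i) Z"
      using dist_triangle[of P Z "loc i"] by (simp add: x_def dist_commute)
    ultimately show "f i \<le> - (x * wA i)"
      unfolding f_def wA_def A_def by (intro supporter_bound) auto
  next
    fix j assume "j \<in> B"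
    moreover have "dist (loc j) P \<le> x + dist (loc j) Z"
      using dist_triangle[of "loc j" P Z] by (simp add: x_def dist_commute add.commute)
    ultimately show "f j \<le> x * wB j"
      unfolding f_def wB_def B_def by (intro opponent_bound) auto
  qed
  also have "\<dots> = x * (sum wB B - sum wA A)"
    by (simp add: sum_negf sum_distrib_left algebra_simps)
  also have "\<dots> \<le> 0"
    using assms(2) unfolding WMR5_selects_def A_def B_def wA_def wB_def x_def
    by (simp add: mult_nonneg_nonpos)
  finally show ?thesis
    by (simp add: f_def SC_def sum_subtractf sum_distrib_left)
qed

theorem mainTheorem15:
  fixes N :: "'v set" and loc :: "'v \<Rightarrow> 'a::metric_space" and P Q Z :: 'a
  assumes "finite N"
    and "WMR5_selects N loc P Q"
  shows "SC N loc P \<le> SC N loc Q + (1 + sqrt 2) * SC N loc Z"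
proof -
  have "SC N loc P \<le> SC N loc Q + sqrt 2 * SC N loc Z"
    using assms by (rule SC_le_of_WMR5_selects)
  also have "\<dots> \<le> SC N loc Q + (1 + sqrt 2) * SC N loc Z"
    using SC_nonneg[of N loc Z] by (simp add: algebra_simps)
  finally show ?thesis .
qed

end
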